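(* Let $G$ be a multi-hypergraph all of whose edges have size 1 (loops) or size 2, such that each vertex has at most one loop (while 2-edges may have arbitrary multiplicity). Then $\operatorname{ex}(G,\mathcal{D})\geq\frac{2}{3}e(G)$.
   Context: The dumbbell $\mathcal{D}$ is the hypergraph on two vertices $u,v$ with edges $\{u,v\},\{u\},\{v\}$. A copy of $\mathcal{D}$ in $G$ is a sub-multihypergraph isomorphic to $\mathcal{D}$ (preserving edge sizes). $e(G)$ counts all edges (loops and 2-edges) with multiplicity, and $\operatorname{ex}(G,\mathcal{D})$ is the maximum number of edges (with multiplicity) of a sub-multihypergraph of $G$ containing no copy of $\mathcal{D}$. *)

theory Defs
  imports Complex_Main "HOL-Library.Multiset"
begin

text \<open>A multi-hypergraph with edges of size 1 and 2 on vertex set V, where each vertex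
carries at most one loop: the loops are given by the set L of looped vertices,
the 2-edges by a multiset E of 2-element vertex sets (arbitrary multiplicity).\<close>

definition loop2_graph :: "'a set \<Rightarrow> 'a set \<Rightarrow> 'a set multiset \<Rightarrow> bool" where
  "loop2_graph V L E \<longleftrightarrow> finite V \<and> L \<subseteq> V \<and> (\<forall>e \<in># E. e \<subseteq> V \<and> card e = 2)"

definition num_edges :: "'a set \<Rightarrow> 'a set multiset \<Rightarrow> nat" where
  "num_edges L E = card L + size E"

definition has_dumbbell :: "'a set \<Rightarrow> 'a set multiset \<Rightarrow> bool" where
  "has_dumbbell L E \<longleftrightarrow> (\<exists>u v. u \<noteq> v \<and> {u, v} \<in># E \<and> u \<in> L \<and> v \<in> L)"

definition ex_dumbbell :: "'a set \<Rightarrow> 'a set multiset \<Rightarrow> nat" where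
  "ex_dumbbell L E = Max {num_edges L' E' | L' E'. L' \<subseteq> L \<and> E' \<subseteq># E \<and> \<not> has_dumbbell L' E'}"

end

theory Submission
  imports Defs
begin

text \<open>Induct on the number of loops, removing a looped vertex v and looking at the 2-edges
that join v to other looped vertices. If there are none, keep the loop at v. If there are
at least two, delete the loop at v and keep all of them. If there is exactly one, {v,w},
delete the loop at w and keep both the loop at v and the edge {v,w}. In every case at least
two thirds of the removed edges are restored without creating a dumbbell.\<close>

definition dumbbell_free_two_thirds :: "'a set \<Rightarrow> 'a set multiset \<Rightarrow> bool" where
  "dumbbell_free_two_thirds L E \<longleftrightarrow>
     (\<exists>L' E'. L' \<subseteq> L \<and> E' \<subseteq># E \<and> (\<forall>e\<in>#E'. \<not> e \<subseteq> L') \<and>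
        2 * (card L + size E) \<le> 3 * (card L' + size E'))"

lemma dumbbell_free_two_thirds_empty:
  assumes "{} \<notin># E"
  shows "dumbbell_free_two_thirds {} E"
  using assms unfolding dumbbell_free_two_thirds_def
  by (intro exI[of _ "{}"] exI[of _ E]) auto

lemma dumbbell_free_two_thirds_keep_loop:
  assumes "finite L" "v \<in> L" and no_inner_edge: "\<forall>e\<in>#E. v \<in> e \<longrightarrow> \<not> e \<subseteq> L"
    and "dumbbell_free_two_thirds (L - {v}) E"
  shows "dumbbell_free_two_thirds L E"
proof -
  obtain L' E' where L': "L' \<subseteq> L - {v}" "E' \<subseteq># E" "\<forall>e\<in>#E'. \<not> e \<subseteq> L'"
    and count: "2 * (card (L - {v}) + size E) \<le> 3 * (card L' + size E')"
    using assms(4) unfolding dumbbell_free_two_thirds_def by blast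
  have "insert v L' \<subseteq> L" using L'(1) assms(2) by blast
  moreover note L'(2)
  moreover have "\<forall>e\<in>#E'. \<not> e \<subseteq> insert v L'"
  proof (intro ballI notI)
    fix e assume e: "e \<in># E'" and sub: "e \<subseteq> insert v L'"
    show False
    proof (cases "v \<in> e")
      case True
      have "e \<in># E" using e L'(2) by (rule mset_subset_eqD[rotated])
      then show False using True sub \<open>insert v L' \<subseteq> L\<close> no_inner_edge by blast
    next
      case False
      then have "e \<subseteq> L'" using sub by blast
      then show False using e L'(3) by blast
    qed
  qed
  moreover have "2 * (card L + size E) \<le> 3 * (card (insert v L') + size E')"
  proof -
    have "finite L'" using L'(1) assms(1) by (meson finite_Diff finite_subset)
    moreover have "v \<notin> L'" using L'(1) by blast
    ultimately have "card (insert v L') = card L' + 1" by simp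
    moreover have "card L = card (L - {v}) + 1"
      using card.remove[OF assms(1,2)] by simp
    ultimately show ?thesis using count by (simp add: algebra_simps)
  qed
  ultimately show ?thesis unfolding dumbbell_free_two_thirds_def by (intro exI conjI)
qed

lemma dumbbell_free_two_thirds_drop_loop:
  assumes "finite L" "v \<in> L" "F \<subseteq># E" "\<forall>e\<in>#F. v \<in> e" "2 \<le> size F"
    and "dumbbell_free_two_thirds (L - {v}) (E - F)"
  shows "dumbbell_free_two_thirds L E"
proof -
  obtain L' E' where L': "L' \<subseteq> L - {v}" "E' \<subseteq># E - F" "\<forall>e\<in>#E'. \<not> e \<subseteq> L'"
    and count: "2 * (card (L - {v}) + size (E - F)) \<le> 3 * (card L' + size E')"
    using assms(6) unfolding dumbbell_free_two_thirds_def by blast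
  have "L' \<subseteq> L" using L'(1) by blast
  moreover have "E' + F \<subseteq># E"
    using subset_mset.add_right_mono[OF L'(2), of F] assms(3) by simp
  moreover have "\<forall>e\<in>#E' + F. \<not> e \<subseteq> L'"
  proof
    fix e assume "e \<in># E' + F"
    then consider "e \<in># E'" | "e \<in># F" by fastforce
    then show "\<not> e \<subseteq> L'"
      using L'(1,3) assms(4) by cases blast+
  qed
  moreover have "2 * (card L + size E) \<le> 3 * (card L' + size (E' + F))"
  proof -
    have "size (E - F) + size F = size E"
      using assms(3) by (simp add: size_Diff_submset size_mset_mono)
    moreover have "card L = card (L - {v}) + 1"
      using card.remove[OF assms(1,2)] by simp
    ultimately show ?thesis using count assms(5) by (simp add: algebra_simps)
  qed
  ultimately show ?thesis unfolding dumbbell_free_two_thirds_def by (intro exI conjI)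
qed

lemma dumbbell_free_two_thirds_pendant_edge:
  assumes "finite L" "v \<in> L" "w \<in> L" "v \<noteq> w" "{v, w} \<in># E"
    and no_other_inner_edge: "\<forall>e\<in>#E - {#{v, w}#}. v \<in> e \<longrightarrow> \<not> e \<subseteq> L"
    and "dumbbell_free_two_thirds (L - {v, w}) (E - {#{v, w}#})"
  shows "dumbbell_free_two_thirds L E"
proof -
  obtain L' E' where L': "L' \<subseteq> L - {v, w}" "E' \<subseteq># E - {#{v, w}#}" "\<forall>e\<in>#E'. \<not> e \<subseteq> L'"
    and count: "2 * (card (L - {v, w}) + size (E - {#{v, w}#})) \<le> 3 * (card L' + size E')"
    using assms(7) unfolding dumbbell_free_two_thirds_def by blast
  have "insert v L' \<subseteq> L" using L'(1) assms(2) by blast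
  moreover have "E' + {#{v, w}#} \<subseteq># E"
    using subset_mset.add_right_mono[OF L'(2), of "{#{v, w}#}"] assms(5) by simp
  moreover have "\<forall>e\<in>#E' + {#{v, w}#}. \<not> e \<subseteq> insert v L'"
  proof (intro ballI notI)
    fix e assume "e \<in># E' + {#{v, w}#}" and sub: "e \<subseteq> insert v L'"
    then consider "e \<in># E'" | "e = {v, w}" by fastforce
    then show False
    proof cases
      case 1
      have "e \<in># E - {#{v, w}#}" using 1 L'(2) by (rule mset_subset_eqD[rotated])
      show False
      proof (cases "v \<in> e")
        case True
        have "e \<subseteq> L" using sub \<open>insert v L' \<subseteq> L\<close> by (rule subset_trans)
        then show False using True \<open>e \<in># E - {#{v, w}#}\<close> no_other_inner_edge by blast
      next
        case False
        then have "e \<subseteq> L'" using sub by blast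
        then show False using 1 L'(3) by blast
      qed
    next
      case 2
      then have "w \<in> L'" using sub assms(4) by simp
      then show False using L'(1) by blast
    qed
  qed
  moreover have "2 * (card L + size E) \<le> 3 * (card (insert v L') + size (E' + {#{v, w}#}))"
  proof -
    have "finite L'" using L'(1) assms(1) by (meson finite_Diff finite_subset)
    moreover have "v \<notin> L'" using L'(1) by blast
    ultimately have "card (insert v L') = card L' + 1" by simp
    moreover have "card L = card (L - {v, w}) + 2"
      using card_Diff_subset[of "{v, w}" L] card_mono[OF assms(1), of "{v, w}"] assms(2-4)
      by simp
    moreover have "size E = size (E - {#{v, w}#}) + 1"
      using size_Suc_Diff1[OF assms(5)] by simp
    ultimately show ?thesis using count by (simp add: algebra_simps)
  qed
  ultimately show ?thesis unfolding dumbbell_free_two_thirds_def by (intro exI conjI)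
qed

lemma dumbbell_free_two_thirds_if_graph:
  assumes "finite L" "\<forall>e\<in>#E. card e = 2"
  shows "dumbbell_free_two_thirds L E"
  using assms
proof (induction "card L" arbitrary: L E rule: less_induct)
  case less
  show ?case
  proof (cases "L = {}")
    case True
    have "{} \<notin># E" using less.prems(2) by fastforce
    then show ?thesis using True dumbbell_free_two_thirds_empty by blast
  next
    case False
    then obtain v where v: "v \<in> L" by blast
    have IH: "dumbbell_free_two_thirds (L - A) E'" if "v \<in> A" "\<forall>e\<in>#E'. card e = 2" for A E'
    proof (rule less.hyps)
      show "card (L - A) < card L"
        using less.prems(1) v that(1) by (intro psubset_card_mono) auto
    qed (use less.prems(1) that(2) in auto)
    define F where "F = filter_mset (\<lambda>e. v \<in> e \<and> e \<subseteq> L) E"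
    have F_sub: "F \<subseteq># E" unfolding F_def by simp
    have "size F = 0 \<or> size F = 1 \<or> 2 \<le> size F" by linarith
    then consider "F = {#}" | e where "F = {#e#}" | "2 \<le> size F"
      using size_1_singleton_mset by auto
    then show ?thesis
    proof cases
      case 1
      then have "\<forall>e\<in>#E. v \<in> e \<longrightarrow> \<not> e \<subseteq> L"
        unfolding F_def by simp
      then show ?thesis
        by (rule dumbbell_free_two_thirds_keep_loop[OF less.prems(1) v _
              IH[of "{v}", OF singletonI less.prems(2)]])
    next
      case (2 e)
      then have "e \<in># F" by simp
      then have e: "e \<in># E" "v \<in> e" "e \<subseteq> L" unfolding F_def by auto
      have "card e = 2" using less.prems(2) e(1) by blast
      then obtain a b where ab: "a \<noteq> b" "e = {a, b}" by (meson card_2_iff)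
      define w where "w = (if a = v then b else a)"
      have w: "e = {v, w}" "v \<noteq> w" "w \<in> L" using ab e(2,3) unfolding w_def by auto
      have "filter_mset (\<lambda>e. v \<in> e \<and> e \<subseteq> L) (E - {#e#}) = {#}"
        using 2 e unfolding F_def by (simp add: filter_single_mset)
      then have "\<forall>e'\<in>#E - {#e#}. v \<in> e' \<longrightarrow> \<not> e' \<subseteq> L"
        unfolding filter_mset_eq_mempty_iff by blast
      moreover have "dumbbell_free_two_thirds (L - {v, w}) (E - {#e#})"
        using less.prems(2) by (intro IH) (auto dest: in_diffD)
      ultimately show ?thesis
        using dumbbell_free_two_thirds_pendant_edge[OF less.prems(1) v w(3,2)] e(1)
        unfolding w(1) by blast
    next
      case 3
      have "\<forall>e\<in>#F. v \<in> e" unfolding F_def by simp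
      moreover have "dumbbell_free_two_thirds (L - {v}) (E - F)"
        using less.prems(2) by (intro IH) (auto dest: in_diffD)
      ultimately show ?thesis
        using dumbbell_free_two_thirds_drop_loop[OF less.prems(1) v F_sub _ 3] by blast
    qed
  qed
qed

lemma not_has_dumbbell_if_no_edge_within:
  assumes "\<forall>e\<in>#E. \<not> e \<subseteq> L"
  shows "\<not> has_dumbbell L E"
proof
  assume "has_dumbbell L E"
  then obtain u w where "{u, w} \<in># E" "u \<in> L" "w \<in> L"
    unfolding has_dumbbell_def by blast
  then show False using assms by (metis empty_subsetI insert_subset)
qed

lemma num_edges_le_ex_dumbbell:
  assumes "finite L" "L' \<subseteq> L" "E' \<subseteq># E" "\<not> has_dumbbell L' E'"
  shows "num_edges L' E' \<le> ex_dumbbell L E"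
proof -
  let ?S = "{num_edges L' E' | L' E'. L' \<subseteq> L \<and> E' \<subseteq># E \<and> \<not> has_dumbbell L' E'}"
  have "?S \<subseteq> {..num_edges L E}"
  proof
    fix n assume "n \<in> ?S"
    then obtain L'' E'' where "n = num_edges L'' E''" "L'' \<subseteq> L" "E'' \<subseteq># E" by blast
    then show "n \<in> {..num_edges L E}"
      using card_mono[OF assms(1) \<open>L'' \<subseteq> L\<close>] size_mset_mono[OF \<open>E'' \<subseteq># E\<close>]
      unfolding num_edges_def by simp
  qed
  then have "finite ?S" using finite_subset by blast
  moreover have "num_edges L' E' \<in> ?S" using assms(2-4) by blast
  ultimately show ?thesis unfolding ex_dumbbell_def by (rule Max_ge)
qed

theorem theorem4p4:
  fixes V L :: "'a set" and E :: "'a set multiset"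
  assumes "loop2_graph V L E"
  shows "real (ex_dumbbell L E) \<ge> 2 / 3 * real (num_edges L E)"
proof -
  have finite_L: "finite L" and "\<forall>e\<in>#E. card e = 2"
    using assms finite_subset[of L V] unfolding loop2_graph_def by auto
  then have "dumbbell_free_two_thirds L E" by (rule dumbbell_free_two_thirds_if_graph)
  then obtain L' E' where L': "L' \<subseteq> L" "E' \<subseteq># E" "\<forall>e\<in>#E'. \<not> e \<subseteq> L'"
    and count: "2 * (card L + size E) \<le> 3 * (card L' + size E')"
    unfolding dumbbell_free_two_thirds_def by blast
  have "num_edges L' E' \<le> ex_dumbbell L E"
    using num_edges_le_ex_dumbbell[OF finite_L L'(1,2) not_has_dumbbell_if_no_edge_within[OF L'(3)]] .
  moreover have "2 * num_edges L E \<le> 3 * num_edges L' E'"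
    using count by (simp only: num_edges_def)
  ultimately have "2 * num_edges L E \<le> 3 * ex_dumbbell L E" by linarith
  then have "real (2 * num_edges L E) \<le> real (3 * ex_dumbbell L E)"
    by (simp only: of_nat_le_iff)
  then show ?thesis by simp
qed

end
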